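(* Assume $\operatorname{rank}(X)=n$ and that $\xi_r(\varpi^N)<1/2$ for some $r\in\{0,\ldots,N\}$; set $r^*(\varpi^N)=\max\{r\in\{0,\ldots,N\}:\xi_r(\varpi^N)<1/2\}$. Suppose there exists $\tilde A\in\mathbb{R}^{n\times s}$ with pairwise distinct columns such that $\min_{i\in\mathbb{S}}|I_i(\tilde A)|\ge s\,\nu_n(X)$ and $\|\phi(\tilde A)\|_0\le r^*(\varpi^N)$. Then $\Psi(\varpi^N)=\{\mathrm{set}(\tilde A)\}$.
   Context: Data: integers $n,s,N\ge1$ and a dataset $\varpi^N=((x_1,y_1),\ldots,(x_N,y_N))$ with $x_t\in\mathbb{R}^n$, $y_t\in\mathbb{R}$; $X=[x_1\ \cdots\ x_N]\in\mathbb{R}^{n\times N}$. Let $\mathbb{T}=\{1,\ldots,N\}$, $\mathbb{S}=\{1,\ldots,s\}$. For $A=[a_1\ \cdots\ a_s]\in\mathbb{R}^{n\times s}$, $\mathrm{set}(A)=\{a_1,\ldots,a_s\}$; $\sigma_A:\mathbb{T}\to\mathbb{S}$ is a switching signal satisfying $\sigma_A(t)\in\arg\min_{i\in\mathbb{S}}|y_t-x_t^\top a_i|$ for all $t$, selected uniquely by a fixed rule depending only on $A$ and the data (among all admissible choices, one maximizing $\min_{i}|I_i(A)|$, ties then broken by assigning the smallest admissible index). $I_i(A)=\{t\in\mathbb{T}:\sigma_A(t)=i\}$. $\phi(A)=\big(y_1-x_1^\top a_{\sigma_A(1)},\ldots,y_N-x_N^\top a_{\sigma_A(N)}\big)^\top$,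 $\mathcal{J}(A)=\|\phi(A)\|_1=\sum_t\min_i|y_t-a_i^\top x_t|$, and $\phi_{\mathcal{T}}(A)$ its subvector indexed by $\mathcal{T}\subset\mathbb{T}$. $\|w\|_0$ is the number of nonzero entries. The LSM estimator is $\Psi(\varpi^N)=\{\mathrm{set}(\hat A):\hat A\in\arg\min_{A\in\mathbb{R}^{n\times s}}\mathcal{J}(A)\}$. The $r$-th concentration ratio is $$\xi_r(\varpi^N)=\sup\Big\{\frac{\|\phi_{\mathcal{T}}(A)-\phi_{\mathcal{T}}(A')\|_1}{\|\phi(A)-\phi(A')\|_1}: A,A'\in\mathbb{R}^{n\times s},\ \mathcal{T}\subset\mathbb{T},\ \phi(A)\ne\phi(A'),\ |\mathcal{T}|\le r\Big\}.$$ Genericity index: for $\operatorname{rank}(X)=n$, $\nu_n(X)$ is the smallest integer $m$ such that every submatrix $X_{\mathcal{S}}$ formed by $m$ columns of $X$ ($\mathcal{S}\subset\mathbb{T}$, $|\mathcal{S}|=m$) has rank $n$. *)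

theory Defs
  imports "HOL-Analysis.Analysis"
begin

text \<open>Data points are given as two lists xs (regressors in real^'n, so
n = CARD('n)) and ys (outputs) of common length N; time indices are 0..<N.
A parameter matrix A in R^(n x s) is a list of s columns; mode indices are 0..<s.
A switching signal is a list of length N of mode indices.\<close>

definition residual :: "(real^'n) list \<Rightarrow> real list \<Rightarrow> (real^'n) list \<Rightarrow> nat \<Rightarrow> nat \<Rightarrow> real" where
  "residual xs ys A t i = ys ! t - (xs ! t) \<bullet> (A ! i)"

definition admissible_sig :: "(real^'n) list \<Rightarrow> real list \<Rightarrow> nat \<Rightarrow> (real^'n) list \<Rightarrow> nat list set" where
  "admissible_sig xs ys s A = {\<sigma>. length \<sigma> = length xs \<and>
     (\<forall>t<length xs. \<sigma> ! t < s \<and>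
        (\<forall>i<s. \<bar>residual xs ys A t (\<sigma> ! t)\<bar> \<le> \<bar>residual xs ys A t i\<bar>))}"

definition mode_set :: "nat list \<Rightarrow> nat \<Rightarrow> nat set" where
  "mode_set \<sigma> i = {t. t < length \<sigma> \<and> \<sigma> ! t = i}"

definition sig_score :: "nat \<Rightarrow> nat list \<Rightarrow> nat" where
  "sig_score s \<sigma> = Min ((\<lambda>i. card (mode_set \<sigma> i)) ` {0..<s})"

definition best_sig :: "(real^'n) list \<Rightarrow> real list \<Rightarrow> nat \<Rightarrow> (real^'n) list \<Rightarrow> nat list set" where
  "best_sig xs ys s A = {\<sigma> \<in> admissible_sig xs ys s A.
      \<forall>\<sigma>' \<in> admissible_sig xs ys s A. sig_score s \<sigma>' \<le> sig_score s \<sigma>}"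

text \<open>The fixed selection rule: among admissible signals maximizing min_i |I_i|,
the lexicographically least one (smallest admissible index first).\<close>
definition sig :: "(real^'n) list \<Rightarrow> real list \<Rightarrow> nat \<Rightarrow> (real^'n) list \<Rightarrow> nat list" where
  "sig xs ys s A = (THE \<sigma>. \<sigma> \<in> best_sig xs ys s A \<and>
      (\<forall>\<sigma>' \<in> best_sig xs ys s A. \<sigma>' \<noteq> \<sigma> \<longrightarrow> (\<sigma>, \<sigma>') \<in> lexord {(a, b). a < b}))"

definition I_set :: "(real^'n) list \<Rightarrow> real list \<Rightarrow> nat \<Rightarrow> (real^'n) list \<Rightarrow> nat \<Rightarrow> nat set" where
  "I_set xs ys s A i = mode_set (sig xs ys s A) i"

definition phi :: "(real^'n) list \<Rightarrow> real list \<Rightarrow> nat \<Rightarrow> (real^'n) list \<Rightarrow> nat \<Rightarrow> real" where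
  "phi xs ys s A t = residual xs ys A t (sig xs ys s A ! t)"

definition Jcost :: "(real^'n) list \<Rightarrow> real list \<Rightarrow> nat \<Rightarrow> (real^'n) list \<Rightarrow> real" where
  "Jcost xs ys s A = (\<Sum>t<length xs. \<bar>phi xs ys s A t\<bar>)"

definition Psi :: "(real^'n) list \<Rightarrow> real list \<Rightarrow> nat \<Rightarrow> (real^'n) set set" where
  "Psi xs ys s = {set Ah | Ah. length Ah = s \<and>
      (\<forall>A. length A = s \<longrightarrow> Jcost xs ys s Ah \<le> Jcost xs ys s A)}"

definition xi :: "(real^'n) list \<Rightarrow> real list \<Rightarrow> nat \<Rightarrow> nat \<Rightarrow> real" where
  "xi xs ys s r = Sup {(\<Sum>t\<in>T. \<bar>phi xs ys s A t - phi xs ys s A' t\<bar>) /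
                       (\<Sum>t<length xs. \<bar>phi xs ys s A t - phi xs ys s A' t\<bar>) | A A' T.
        length A = s \<and> length A' = s \<and> T \<subseteq> {0..<length xs} \<and>
        (\<exists>t<length xs. phi xs ys s A t \<noteq> phi xs ys s A' t) \<and> card T \<le> r}"

definition r_star :: "(real^'n) list \<Rightarrow> real list \<Rightarrow> nat \<Rightarrow> nat" where
  "r_star xs ys s = Max {r. r \<le> length xs \<and> xi xs ys s r < 1/2}"

definition rankX :: "(real^'n) list \<Rightarrow> nat" where
  "rankX xs = dim (set xs)"

definition nu :: "(real^'n) list \<Rightarrow> nat" where
  "nu xs = (LEAST m. \<forall>S. S \<subseteq> {0..<length xs} \<and> card S = m \<longrightarrow>
              dim ((\<lambda>t. xs ! t) ` S) = CARD('n))"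

definition l0 :: "(real^'n) list \<Rightarrow> real list \<Rightarrow> nat \<Rightarrow> (real^'n) list \<Rightarrow> nat" where
  "l0 xs ys s A = card {t. t < length xs \<and> phi xs ys s A t \<noteq> 0}"

end

theory Submission
  imports Defs "HOL-Library.List_Lexorder"
begin

text \<open>The residual vector of the true matrix is supported on at most r^* indices. Since
  xi_{r^*} < 1/2, any parameter matrix with a different residual vector changes it mostly
  off that support, and the l1 triangle inequality makes its cost strictly larger; hence
  the true matrix is a minimiser and every minimiser has exactly the same residuals. On every mode set of the true
  matrix, of size at least s nu_n(X), some mode of the competitor is used at least
  nu_n(X) times, and on those regressors (which span R^n) the two columns have the
  same inner products, so they coincide. Thus the competitor contains all s distinct
  true columns, and having only s columns it has exactly these.\<close>

lemma admissible_sig_finite: "finite (admissible_sig xs ys s A)"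
  by (rule finite_subset[OF _ finite_lists_length_eq[of "{0..<s}" "length xs"]])
     (auto simp: admissible_sig_def in_set_conv_nth)

lemma admissible_sig_nonempty:
  assumes "s \<ge> 1"
  shows "admissible_sig xs ys s A \<noteq> {}"
proof -
  have "\<exists>i<s. \<forall>j<s. \<bar>residual xs ys A t i\<bar> \<le> \<bar>residual xs ys A t j\<bar>" for t
  proof -
    let ?r = "\<lambda>i. \<bar>residual xs ys A t i\<bar>"
    have "Min (?r ` {0..<s}) \<in> ?r ` {0..<s}"
      using assms by (intro Min_in) auto
    then obtain i where "i < s" "?r i = Min (?r ` {0..<s})"
      by auto
    then show ?thesis
      by (auto intro!: exI[of _ i] Min_le)
  qed
  then obtain f where "\<And>t. f t < s \<and> (\<forall>j<s. \<bar>residual xs ys A t (f t)\<bar> \<le> \<bar>residual xs ys A t j\<bar>)"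
    by metis
  then have "map f [0..<length xs] \<in> admissible_sig xs ys s A"
    by (auto simp: admissible_sig_def)
  then show ?thesis by blast
qed

lemma best_sig_nonempty:
  assumes "s \<ge> 1"
  shows "best_sig xs ys s A \<noteq> {}"
proof -
  let ?Adm = "admissible_sig xs ys s A"
  have "Max (sig_score s ` ?Adm) \<in> sig_score s ` ?Adm"
    by (intro Max_in finite_imageI admissible_sig_finite) (simp add: admissible_sig_nonempty[OF assms])
  then obtain \<sigma> where "\<sigma> \<in> ?Adm" "sig_score s \<sigma> = Max (sig_score s ` ?Adm)"
    by (metis imageE)
  then have "\<sigma> \<in> best_sig xs ys s A"
    unfolding best_sig_def by (simp add: admissible_sig_finite)
  then show ?thesis by blast
qed

lemma best_sig_finite: "finite (best_sig xs ys s A)"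
  using admissible_sig_finite by (rule finite_subset[rotated]) (auto simp: best_sig_def)

text \<open>The relation used in the definition of sig is the strict lexicographic order of
  List_Lexorder, so the selected signal is the least element of best_sig.\<close>

lemma sig_eq_Min_best_sig:
  assumes "s \<ge> 1"
  shows "sig xs ys s A = Min (best_sig xs ys s A)"
proof -
  let ?B = "best_sig xs ys s A"
  have fin: "finite ?B" by (rule best_sig_finite)
  have ne: "?B \<noteq> {}" using best_sig_nonempty[OF assms] .
  show ?thesis
    unfolding sig_def
  proof (rule the_equality)
    show "Min ?B \<in> ?B \<and> (\<forall>\<sigma>'\<in>?B. \<sigma>' \<noteq> Min ?B \<longrightarrow> (Min ?B, \<sigma>') \<in> lexord {(a, b). a < b})"
      using fin ne by (auto simp flip: list_less_def intro: Min_in dest: Min_le order.not_eq_order_implies_strict)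
  next
    fix \<sigma>
    assume "\<sigma> \<in> ?B \<and> (\<forall>\<sigma>'\<in>?B. \<sigma>' \<noteq> \<sigma> \<longrightarrow> (\<sigma>, \<sigma>') \<in> lexord {(a, b). a < b})"
    then have "\<sigma> \<in> ?B" "\<forall>\<sigma>'\<in>?B. \<sigma> \<le> \<sigma>'"
      by (auto simp: list_le_def list_less_def)
    then show "\<sigma> = Min ?B"
      using fin by (intro antisym Min_le) (auto intro: Min_in[OF fin ne])
  qed
qed

lemma sig_admissible:
  assumes "s \<ge> 1"
  shows "sig xs ys s A \<in> admissible_sig xs ys s A"
proof -
  have "Min (best_sig xs ys s A) \<in> best_sig xs ys s A"
    using best_sig_finite best_sig_nonempty[OF assms] by (rule Min_in)
  then have "sig xs ys s A \<in> best_sig xs ys s A"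
    by (simp add: sig_eq_Min_best_sig[OF assms])
  then show ?thesis by (simp add: best_sig_def)
qed

lemma length_sig: "s \<ge> 1 \<Longrightarrow> length (sig xs ys s A) = length xs"
  and sig_nth_less: "s \<ge> 1 \<Longrightarrow> t < length xs \<Longrightarrow> sig xs ys s A ! t < s"
  using sig_admissible[of s xs ys A] by (auto simp: admissible_sig_def)

lemma sum_abs_less_if_diff_concentrated:
  fixes p q :: "'a \<Rightarrow> real"
  assumes "finite U" and "T \<subseteq> U" and "\<And>t. t \<in> U - T \<Longrightarrow> p t = 0"
    and "2 * (\<Sum>t\<in>T. \<bar>q t - p t\<bar>) < (\<Sum>t\<in>U. \<bar>q t - p t\<bar>)"
  shows "(\<Sum>t\<in>U. \<bar>p t\<bar>) < (\<Sum>t\<in>U. \<bar>q t\<bar>)"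
proof -
  have split: "(\<Sum>t\<in>U. f t) = (\<Sum>t\<in>T. f t) + (\<Sum>t\<in>U - T. f t)" for f :: "'a \<Rightarrow> real"
    using assms(1,2) by (metis add.commute sum.subset_diff)
  have "(\<Sum>t\<in>T. \<bar>p t\<bar> - \<bar>q t - p t\<bar>) \<le> (\<Sum>t\<in>T. \<bar>q t\<bar>)"
    by (intro sum_mono) linarith
  moreover have "(\<Sum>t\<in>U - T. \<bar>q t - p t\<bar>) = (\<Sum>t\<in>U - T. \<bar>q t\<bar>)"
    using assms(3) by simp
  moreover have "(\<Sum>t\<in>U - T. \<bar>p t\<bar>) = 0"
    using assms(3) by simp
  ultimately show ?thesis
    using assms(4) unfolding split[of "\<lambda>t. \<bar>p t\<bar>"] split[of "\<lambda>t. \<bar>q t\<bar>"] split[of "\<lambda>t. \<bar>q t - p t\<bar>"]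
    by (simp add: sum_subtractf)
qed

lemma divide_le_1_if_le: "a \<le> b \<Longrightarrow> 0 \<le> b \<Longrightarrow> a / b \<le> (1::real)"
  by (cases "b = 0") (simp_all add: divide_le_eq_1)

lemma concentration_ratio_le_xi:
  fixes xs :: "(real^'n) list"
  assumes "length A = s" "length A' = s" "T \<subseteq> {0..<length xs}" "card T \<le> r"
    and "\<exists>t<length xs. phi xs ys s A t \<noteq> phi xs ys s A' t"
  shows "(\<Sum>t\<in>T. \<bar>phi xs ys s A t - phi xs ys s A' t\<bar>) /
           (\<Sum>t<length xs. \<bar>phi xs ys s A t - phi xs ys s A' t\<bar>) \<le> xi xs ys s r"
  unfolding xi_def
proof (rule cSup_upper)
  show "bdd_above {(\<Sum>t\<in>T. \<bar>phi xs ys s A t - phi xs ys s A' t\<bar>) /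
                    (\<Sum>t<length xs. \<bar>phi xs ys s A t - phi xs ys s A' t\<bar>) | A A' T.
      length A = s \<and> length A' = s \<and> T \<subseteq> {0..<length xs} \<and>
      (\<exists>t<length xs. phi xs ys s A t \<noteq> phi xs ys s A' t) \<and> card T \<le> r}"
  proof (rule bdd_aboveI[of _ 1])
    fix x
    assume "x \<in> {(\<Sum>t\<in>T. \<bar>phi xs ys s A t - phi xs ys s A' t\<bar>) /
                    (\<Sum>t<length xs. \<bar>phi xs ys s A t - phi xs ys s A' t\<bar>) | A A' T.
      length A = s \<and> length A' = s \<and> T \<subseteq> {0..<length xs} \<and>
      (\<exists>t<length xs. phi xs ys s A t \<noteq> phi xs ys s A' t) \<and> card T \<le> r}"
    then obtain B B' U where U: "U \<subseteq> {0..<length xs}"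
      and x: "x = (\<Sum>t\<in>U. \<bar>phi xs ys s B t - phi xs ys s B' t\<bar>) /
                  (\<Sum>t<length xs. \<bar>phi xs ys s B t - phi xs ys s B' t\<bar>)"
      by blast
    let ?D = "\<lambda>U. \<Sum>t\<in>U. \<bar>phi xs ys s B t - phi xs ys s B' t\<bar>"
    have "?D U \<le> ?D {..<length xs}"
      using U by (intro sum_mono2) auto
    moreover have "0 \<le> ?D {..<length xs}"
      by (intro sum_nonneg) auto
    ultimately show "x \<le> 1"
      unfolding x by (simp add: divide_le_1_if_le)
  qed
qed (use assms in blast)

lemma Jcost_less_if_phi_differs:
  fixes xs :: "(real^'n) list"
  assumes "xi xs ys s r < 1/2" and "l0 xs ys s At \<le> r"
    and "length A = s" "length At = s"
    and "\<exists>t<length xs. phi xs ys s A t \<noteq> phi xs ys s At t"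
  shows "Jcost xs ys s At < Jcost xs ys s A"
proof -
  let ?N = "length xs"
  define T where "T = {t. t < ?N \<and> phi xs ys s At t \<noteq> 0}"
  let ?d = "\<lambda>t. \<bar>phi xs ys s A t - phi xs ys s At t\<bar>"
  have T: "T \<subseteq> {..<?N}" "card T \<le> r"
    using assms(2) by (auto simp: T_def l0_def)
  obtain t0 where "t0 < ?N" "?d t0 > 0"
    using assms(5) by auto
  then have D_pos: "0 < (\<Sum>t<?N. ?d t)"
    by (intro sum_pos2) auto
  have "(\<Sum>t\<in>T. ?d t) / (\<Sum>t<?N. ?d t) \<le> xi xs ys s r"
    using concentration_ratio_le_xi[of A s At T xs r ys] T assms(3-5)
    by (simp add: lessThan_atLeast0)
  then have "(\<Sum>t\<in>T. ?d t) / (\<Sum>t<?N. ?d t) < 1/2"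
    using assms(1) by linarith
  then have "2 * (\<Sum>t\<in>T. ?d t) < (\<Sum>t<?N. ?d t)"
    using D_pos by (simp add: field_simps)
  then show ?thesis
    unfolding Jcost_def using T(1)
    by (intro sum_abs_less_if_diff_concentrated[where T = T]) (auto simp: T_def abs_minus_commute)
qed

text \<open>The least number in the definition of nu always exists, since for m > N no
  m-subset of indices exists; if rank X < n it is N + 1.\<close>

lemma span_eq_UNIV_if_card_eq_nu:
  fixes xs :: "(real^'n) list"
  assumes "S \<subseteq> {0..<length xs}" and "card S = nu xs"
  shows "span ((!) xs ` S) = UNIV"
proof -
  let ?P = "\<lambda>m. \<forall>S. S \<subseteq> {0..<length xs} \<and> card S = m \<longrightarrow> dim ((!) xs ` S) = CARD('n)"
  have "?P (Suc (length xs))"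
  proof (intro allI impI)
    fix S assume "S \<subseteq> {0..<length xs} \<and> card S = Suc (length xs)"
    then show "dim ((!) xs ` S) = CARD('n)"
      using card_mono[of "{0..<length xs}" S] by simp
  qed
  then have "?P (nu xs)"
    unfolding nu_def by (rule LeastI)
  then have "dim ((!) xs ` S) = CARD('n)"
    using assms by blast
  then show ?thesis
    by (metis dim_eq_full DIM_cart DIM_real mult_1_right)
qed

lemma eq_if_inner_eq_on_spanning:
  fixes a b :: "'a :: real_inner"
  assumes "span V = UNIV" and "\<And>x. x \<in> V \<Longrightarrow> x \<bullet> a = x \<bullet> b"
  shows "a = b"
proof -
  have "orthogonal (a - b) x" for x
    using assms by (intro orthogonal_to_span[of x V])
      (auto simp: orthogonal_def inner_diff_right inner_commute)
  then show ?thesis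
    by (metis orthogonal_self right_minus_eq)
qed

lemma pigeonhole_card_Int:
  assumes "finite I" and "I \<subseteq> (\<Union>j<s. K j)" and "s * m \<le> card I" and "0 < s"
  shows "\<exists>j<s. m \<le> card (I \<inter> K j)"
proof (rule ccontr)
  assume "\<not> ?thesis"
  then have small: "card (I \<inter> K j) < m" if "j < s" for j
    using that by auto
  have "card I \<le> card (\<Union>j<s. I \<inter> K j)"
    using assms(1,2) by (intro card_mono) auto
  also have "\<dots> \<le> (\<Sum>j<s. card (I \<inter> K j))"
    by (rule card_UN_le) simp
  also have "\<dots> < (\<Sum>j<s. m)"
    using small assms(4) by (intro sum_strict_mono) auto
  finally show False
    using assms(3) by simp
qed

lemma set_subset_if_phi_eq:
  fixes xs :: "(real^'n) list"
  assumes "s \<ge> 1" and "length A = s" "length At = s"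
    and "\<forall>i<s. s * nu xs \<le> card (I_set xs ys s At i)"
    and "\<forall>t<length xs. phi xs ys s A t = phi xs ys s At t"
  shows "set At \<subseteq> set A"
proof
  fix a
  assume "a \<in> set At"
  then obtain i where i: "i < s" "a = At ! i"
    using assms(3) by (auto simp: in_set_conv_nth)
  let ?I = "I_set xs ys s At i"
  let ?K = "mode_set (sig xs ys s A)"
  have I_sub: "?I \<subseteq> {0..<length xs}"
    using length_sig[OF assms(1), of xs ys At] by (auto simp: I_set_def mode_set_def)
  have "?I \<subseteq> (\<Union>j<s. ?K j)"
  proof
    fix t
    assume "t \<in> ?I"
    then have "t < length xs"
      using I_sub by auto
    then show "t \<in> (\<Union>j<s. ?K j)"
      using length_sig[OF assms(1), of xs ys A] sig_nth_less[OF assms(1), of t xs ys A]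
      by (auto simp: mode_set_def)
  qed
  moreover have "s * nu xs \<le> card ?I"
    using assms(4) i(1) by blast
  ultimately obtain j where j: "j < s" "nu xs \<le> card (?I \<inter> ?K j)"
    using pigeonhole_card_Int[where I = ?I and K = ?K and s = s and m = "nu xs"]
      finite_subset[OF I_sub] assms(1) by auto
  then obtain S where S: "S \<subseteq> ?I \<inter> ?K j" "card S = nu xs"
    by (meson obtain_subset_with_card_n)
  have "span ((!) xs ` S) = UNIV"
    using S I_sub by (intro span_eq_UNIV_if_card_eq_nu) auto
  moreover have "x \<bullet> At ! i = x \<bullet> A ! j" if x: "x \<in> (!) xs ` S" for x
  proof -
    obtain t where t: "t \<in> S" "x = xs ! t"
      using x by blast
    then have "t < length xs" "sig xs ys s A ! t = j" "sig xs ys s At ! t = i"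
      using S by (auto simp: I_set_def mode_set_def length_sig[OF assms(1)])
    then show ?thesis
      using assms(5) t(2) by (auto simp: phi_def residual_def)
  qed
  ultimately have "a = A ! j"
    unfolding i(2) by (rule eq_if_inner_eq_on_spanning)
  then show "a \<in> set A"
    using j(1) assms(2) by simp
qed

lemma Jcost_le_if_concentrated:
  fixes xs :: "(real^'n) list"
  assumes "xi xs ys s r < 1/2" and "l0 xs ys s At \<le> r"
    and "length A = s" "length At = s"
  shows "Jcost xs ys s At \<le> Jcost xs ys s A"
proof (cases "\<exists>t<length xs. phi xs ys s A t \<noteq> phi xs ys s At t")
  case True
  then show ?thesis
    using Jcost_less_if_phi_differs[OF assms] by simp
next
  case False
  then show ?thesis
    unfolding Jcost_def by (auto intro!: sum_mono)
qed

lemma set_eq_if_Jcost_le: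
  fixes xs :: "(real^'n) list"
  assumes "xi xs ys s r < 1/2" and "l0 xs ys s At \<le> r" and "s \<ge> 1"
    and "length A = s" "length At = s" "distinct At"
    and "\<forall>i<s. s * nu xs \<le> card (I_set xs ys s At i)"
    and "Jcost xs ys s A \<le> Jcost xs ys s At"
  shows "set A = set At"
proof -
  have "\<forall>t<length xs. phi xs ys s A t = phi xs ys s At t"
    using Jcost_less_if_phi_differs[OF assms(1,2,4,5)] assms(8) by (meson not_less)
  then have "set At \<subseteq> set A"
    using set_subset_if_phi_eq[OF assms(3,4,5,7)] by blast
  moreover have "card (set A) \<le> card (set At)"
    using assms(4-6) by (metis card_length distinct_card)
  ultimately show ?thesis
    by (metis card_seteq List.finite_set)
qed

lemma xi_r_star_less:
  assumes "\<exists>r \<le> length xs. xi xs ys s r < 1/2"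
  shows "xi xs ys s (r_star xs ys s) < 1/2"
proof -
  have "r_star xs ys s \<in> {r. r \<le> length xs \<and> xi xs ys s r < 1/2}"
    unfolding r_star_def using assms by (intro Max_in) auto
  then show ?thesis by simp
qed

theorem theorem1:
  fixes xs :: "(real^'n) list" and ys :: "real list" and s :: nat and At :: "(real^'n) list"
  assumes "length xs \<ge> 1" and "length ys = length xs" and "s \<ge> 1"
    and "rankX xs = CARD('n)"
    and "\<exists>r \<le> length xs. xi xs ys s r < 1/2"
    and "length At = s" and "distinct At"
    and "\<forall>i<s. card (I_set xs ys s At i) \<ge> s * nu xs"
    and "l0 xs ys s At \<le> r_star xs ys s"
  shows "Psi xs ys s = {set At}"
proof -
  have xi: "xi xs ys s (r_star xs ys s) < 1/2"
    using xi_r_star_less[OF assms(5)] .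
  have "set At \<in> Psi xs ys s"
    unfolding Psi_def using Jcost_le_if_concentrated[OF xi assms(9) _ assms(6)] assms(6) by blast
  moreover have "B = set At" if "B \<in> Psi xs ys s" for B
    using that set_eq_if_Jcost_le[OF xi assms(9,3) _ assms(6,7,8)] assms(6)
    unfolding Psi_def by blast
  ultimately show ?thesis
    by blast
qed

end
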